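(* For every rooted tree $T_r$, the vertex set of $T_r$ contains two disjoint homometric sets, each of size at least $f(T_r)$.
   Context: For a tree $T_r$ rooted at $r$, let $h(T_r)$ be the number of vertices on a longest path in $T_r$ starting at $r$ (so a single vertex has $h=1$); the empty tree $T_\emptyset$ has $h(T_\emptyset)=0$ and $f(T_\emptyset)=0$. For a vertex $v$, $T_v$ denotes the subtree rooted at $v$ consisting of $v$ and its descendants. The function $f$ is defined recursively: if $|V(T_r)|\le 1$ then $f(T_r)=0$; otherwise let the children of $r$ be $v_1,\dots,v_k$ ordered so that $h(T_{v_1})\ge h(T_{v_2})\ge\dots\ge h(T_{v_k})$, where, if the number of children is odd, an extra empty tree $T_{v_k}=T_\emptyset$ is appended so that $k$ is even; then $$f(T_r)=\max\Big\{\sum_{i=1}^{k} f(T_{v_i}),\ \sum_{i=1}^{k/2} h(T_{v_{2i}})\Big\}.$$ The profile of a vertex set is the multiset of pairwise distances (in the tree) between its distinct vertices; two disjoint vertex sets are homometric if their profiles are equal, and the size of the pair is the common cardinality. *)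

theory Defs
  imports Main "HOL-Library.Multiset" "HOL-Library.List_Lexorder"
begin

text \<open>Finite rooted trees: a node with a (finite) list of children subtrees.
  Vertices are addressed by positions (paths of child indices from the root).\<close>

datatype rtree = Nd "rtree list"

text \<open>Number of vertices on a longest path starting at the root.\<close>
fun height :: "rtree \<Rightarrow> nat" where
  "height (Nd ts) = Suc (Max (insert 0 (set (map height ts))))"

inductive is_pos :: "rtree \<Rightarrow> nat list \<Rightarrow> bool" where
  root: "is_pos t []"
| child: "i < length ts \<Longrightarrow> is_pos (ts ! i) p \<Longrightarrow> is_pos (Nd ts) (i # p)"

definition verts :: "rtree \<Rightarrow> nat list set" where
  "verts t = {p. is_pos t p}"

text \<open>Longest common prefix of two positions (their lowest common ancestor).\<close>
fun lcp :: "nat list \<Rightarrow> nat list \<Rightarrow> nat list" where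
  "lcp (a # xs) (b # ys) = (if a = b then a # lcp xs ys else [])"
| "lcp _ _ = []"

text \<open>Tree distance: up from u to the lowest common ancestor, then down to v.\<close>
definition tdist :: "nat list \<Rightarrow> nat list \<Rightarrow> nat" where
  "tdist u v = length u + length v - 2 * length (lcp u v)"

text \<open>Profile: multiset of distances over all unordered pairs of distinct vertices
  (each unordered pair counted once, via a fixed linear order on positions).\<close>
definition profile :: "nat list set \<Rightarrow> nat multiset" where
  "profile S = image_mset (\<lambda>(u, v). tdist u v) (mset_set {(u, v). u \<in> S \<and> v \<in> S \<and> u < v})"

definition homometric :: "nat list set \<Rightarrow> nat list set \<Rightarrow> bool" where
  "homometric A B \<longleftrightarrow> A \<inter> B = {} \<and> profile A = profile B"

definition padded_heights :: "rtree list \<Rightarrow> nat list" where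
  "padded_heights ts = (let hs = rev (sort (map height ts))
                        in if odd (length hs) then hs @ [0] else hs)"

fun f :: "rtree \<Rightarrow> nat" where
  "f (Nd ts) = (if ts = [] then 0 else
     max (sum_list (map f ts))
         (\<Sum>i<length (padded_heights ts) div 2. padded_heights ts ! (2 * i + 1)))"

end

theory Submission imports Defs "HOL-Combinatorics.Permutations" begin

text \<open>Call two vertex sets equivalent if they have the same multiset of distances
  over ordered pairs and the same multiset of depths. Equivalent sets are homometric. If the
  children of the root carry equivalent pairs \<open>X\<^sub>k \<sim> Y\<^sub>k\<close>, then the unions over the children are
  again equivalent: distances inside one child are preserved, and a distance between two
  different children is the sum of the two depths plus 2, so it is controlled by the depth
  multisets. Gluing the pairs supplied by induction gives the bound \<open>\<Sum> f(T\<^sub>v\<^sub>i)\<close>. Alternatively,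
  pair the children of heights \<open>h\<^sub>1 \<ge> h\<^sub>2\<close>, \<open>h\<^sub>3 \<ge> h\<^sub>4\<close>, \<dots> and take in each pair the
  top \<open>h\<^sub>2\<^sub>i\<close> vertices of a longest path in either child; two such paths are equivalent, which
  gives the bound \<open>\<Sum> h\<^sub>2\<^sub>i\<close>.\<close>

lemma length_lcp_le: "length (lcp p q) \<le> length p \<and> length (lcp p q) \<le> length q"
  by (induction p q rule: lcp.induct) auto

lemma lcp_commute: "lcp p q = lcp q p"
  by (induction p q rule: lcp.induct) auto

lemma lcp_self: "lcp p p = p"
  by (induction p) auto

lemma lcp_take_take: "lcp (take a w) (take b w) = take (min a b) w"
proof (induction w arbitrary: a b)
  case (Cons x w)
  then show ?case by (cases a; cases b) auto
qed simp

lemma tdist_commute: "tdist u v = tdist v u"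
  unfolding tdist_def by (simp add: lcp_commute add.commute)

lemma tdist_self: "tdist u u = 0"
  unfolding tdist_def by (simp add: lcp_self)

lemma tdist_Cons_Cons:
  "tdist (a # p) (b # q) = (if a = b then tdist p q else length p + length q + 2)"
  using length_lcp_le[of p q] unfolding tdist_def by auto

lemma tdist_take_take:
  "a \<le> length w \<Longrightarrow> b \<le> length w \<Longrightarrow> tdist (take a w) (take b w) = (if a \<le> b then b - a else a - b)"
  unfolding tdist_def lcp_take_take by auto

lemma is_pos_take: "is_pos t w \<Longrightarrow> is_pos t (take a w)"
proof (induction arbitrary: a rule: is_pos.induct)
  case (root t)
  then show ?case by (simp add: is_pos.root)
next
  case (child i ts p)
  then show ?case by (cases a) (auto intro: is_pos.intros)
qed

lemma Cons_in_verts_Nd: "i < length ts \<Longrightarrow> p \<in> verts (ts ! i) \<Longrightarrow> i # p \<in> verts (Nd ts)"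
  unfolding verts_def by (auto intro: is_pos.child)

lemma exists_pos_length_height: "\<exists>w. is_pos t w \<and> Suc (length w) = height t"
proof (induction t)
  case (Nd ts)
  show ?case
  proof (cases "ts = []")
    case True
    then show ?thesis by (auto intro: is_pos.root)
  next
    case False
    then have "Max (insert 0 (set (map height ts))) \<in> set (map height ts)"
      by (simp add: Max_insert Max_in)
    then obtain i where i: "i < length ts" "height (ts ! i) = Max (insert 0 (set (map height ts)))"
      by (auto simp: in_set_conv_nth)
    obtain w where "is_pos (ts ! i) w" "Suc (length w) = height (ts ! i)"
      using Nd.IH[of "ts ! i"] i(1) by auto
    with i show ?thesis by (auto intro: is_pos.child exI[of _ "i # w"])
  qed
qed

lemma longest_root_path:
  obtains w :: "rtree \<Rightarrow> nat list" where "\<And>t. is_pos t (w t)" "\<And>t. Suc (length (w t)) = height t"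
  using exists_pos_length_height by metis

subsection \<open>Distance-and-depth equivalence\<close>

text \<open>Equality of all these sums says that the multisets of distances over ordered pairs, and
  the multisets of depths, coincide.\<close>

definition dist_depth_equiv :: "nat list set \<Rightarrow> nat list set \<Rightarrow> bool" where
  "dist_depth_equiv X Y \<longleftrightarrow> finite X \<and> finite Y \<and>
     (\<forall>g::nat\<Rightarrow>nat. (\<Sum>u\<in>X. \<Sum>v\<in>X. g (tdist u v)) = (\<Sum>u\<in>Y. \<Sum>v\<in>Y. g (tdist u v))) \<and>
     (\<forall>g::nat\<Rightarrow>nat. (\<Sum>u\<in>X. g (length u)) = (\<Sum>u\<in>Y. g (length u)))"

lemma dist_depth_equivD:
  fixes g :: "nat \<Rightarrow> nat"
  assumes "dist_depth_equiv X Y"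
  shows "finite X" "finite Y"
    "(\<Sum>u\<in>X. \<Sum>v\<in>X. g (tdist u v)) = (\<Sum>u\<in>Y. \<Sum>v\<in>Y. g (tdist u v))"
    "(\<Sum>u\<in>X. g (length u)) = (\<Sum>u\<in>Y. g (length u))"
  using assms unfolding dist_depth_equiv_def by blast+

lemma card_eq_if_dist_depth_equiv: "dist_depth_equiv X Y \<Longrightarrow> card X = card Y"
  using dist_depth_equivD(4)[of X Y "\<lambda>_. 1"] by simp

lemma count_profile:
  assumes "finite S"
  shows "count (profile S) d = card {(u, v). u \<in> S \<and> v \<in> S \<and> u < v \<and> tdist u v = d}"
proof -
  let ?P = "{(u, v). u \<in> S \<and> v \<in> S \<and> u < v}"
  have "finite ?P" by (rule finite_subset[of _ "S \<times> S"]) (use assms in auto)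
  have "count (profile S) d = (\<Sum>x | x \<in># mset_set ?P \<and> d = (case x of (u, v) \<Rightarrow> tdist u v). count (mset_set ?P) x)"
    unfolding profile_def by (rule count_image_mset')
  also have "\<dots> = (\<Sum>x \<in> {(u, v). u \<in> S \<and> v \<in> S \<and> u < v \<and> tdist u v = d}. 1)"
    by (rule sum.cong) (use \<open>finite ?P\<close> in auto)
  finally show ?thesis by simp
qed

lemma card_ordered_pairs_at_distance:
  assumes "finite S"
  shows "card {(u, v). u \<in> S \<and> v \<in> S \<and> tdist u v = d} = 2 * count (profile S) d + (if d = 0 then card S else 0)"
proof -
  let ?L = "{(u, v). u \<in> S \<and> v \<in> S \<and> u < v \<and> tdist u v = d}"
  let ?R = "{(u, v). u \<in> S \<and> v \<in> S \<and> v < u \<and> tdist u v = d}"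
  let ?D = "{(u, v). u \<in> S \<and> v \<in> S \<and> u = v \<and> tdist u v = d}"
  have fin: "finite ?L" "finite ?R" "finite ?D"
    by (rule finite_subset[of _ "S \<times> S"], use assms in auto)+
  have "{(u, v). u \<in> S \<and> v \<in> S \<and> tdist u v = d} = ?L \<union> ?R \<union> ?D"
    by auto
  moreover have "card (?L \<union> ?R \<union> ?D) = card ?L + card ?R + card ?D"
    using fin by (subst card_Un_disjoint, auto)+
  moreover have "?R = prod.swap ` ?L" by (auto simp: tdist_commute)
  then have "card ?R = card ?L" by (simp add: card_image)
  moreover have "?D = (if d = 0 then (\<lambda>u. (u, u)) ` S else {})" by (auto simp: tdist_self)
  then have "card ?D = (if d = 0 then card S else 0)" by (simp add: card_image inj_on_def)
  ultimately show ?thesis using count_profile[OF assms, of d] by simp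
qed

lemma sum_indicator_tdist:
  assumes "finite S"
  shows "(\<Sum>u\<in>S. \<Sum>v\<in>S. if tdist u v = d then 1 else 0 :: nat) = card {(u, v). u \<in> S \<and> v \<in> S \<and> tdist u v = d}"
proof -
  have "(\<Sum>u\<in>S. \<Sum>v\<in>S. if tdist u v = d then 1 else 0 :: nat) = (\<Sum>(u, v)\<in>S \<times> S. if tdist u v = d then 1 else 0)"
    by (simp add: sum.cartesian_product)
  also have "\<dots> = card {x \<in> S \<times> S. case_prod tdist x = d}"
    using assms by (simp add: sum.If_cases case_prod_beta' split_def Int_def)
  also have "{x \<in> S \<times> S. case_prod tdist x = d} = {(u, v). u \<in> S \<and> v \<in> S \<and> tdist u v = d}"
    by auto
  finally show ?thesis .
qed

lemma profile_eq_if_dist_depth_equiv: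
  assumes "dist_depth_equiv A B"
  shows "profile A = profile B"
proof (rule multiset_eqI)
  fix d
  have fin: "finite A" "finite B" using dist_depth_equivD[OF assms] by auto
  have "card {(u, v). u \<in> A \<and> v \<in> A \<and> tdist u v = d} = card {(u, v). u \<in> B \<and> v \<in> B \<and> tdist u v = d}"
    using dist_depth_equivD(3)[OF assms, of "\<lambda>x. if x = d then 1 else 0"]
    by (simp add: sum_indicator_tdist fin)
  then show "count (profile A) d = count (profile B) d"
    using card_eq_if_dist_depth_equiv[OF assms]
    by (cases "d = 0") (simp_all add: card_ordered_pairs_at_distance fin)
qed

subsection \<open>Gluing equivalent sets below distinct children\<close>

lemma sum_UN_image_Cons:
  fixes n :: nat
  assumes "inj_on \<alpha> {..<n}" "\<forall>i<n. finite (X i)"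
  shows "(\<Sum>u\<in>(\<Union>i<n. Cons (\<alpha> i) ` X i). \<phi> u) = (\<Sum>i<n. \<Sum>p\<in>X i. \<phi> (\<alpha> i # p))"
proof -
  have "(\<Sum>u\<in>(\<Union>i<n. Cons (\<alpha> i) ` X i). \<phi> u) = (\<Sum>i<n. \<Sum>u\<in>Cons (\<alpha> i) ` X i. \<phi> u)"
    by (rule sum.UNION_disjoint) (use assms in \<open>auto simp: inj_on_def\<close>)
  also have "\<dots> = (\<Sum>i<n. \<Sum>p\<in>X i. \<phi> (\<alpha> i # p))"
    by (simp add: sum.reindex)
  finally show ?thesis .
qed

lemma card_UN_image_Cons:
  fixes n :: nat
  assumes "inj_on \<alpha> {..<n}" "\<forall>i<n. finite (X i)"
  shows "card (\<Union>i<n. Cons (\<alpha> i) ` X i) = (\<Sum>i<n. card (X i))"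
  using sum_UN_image_Cons[OF assms, of "\<lambda>_. 1::nat"] by simp

lemma sum_tdist_UN_image_Cons:
  fixes n :: nat and g :: "nat \<Rightarrow> nat"
  assumes inj: "inj_on \<alpha> {..<n}" and fin: "\<forall>i<n. finite (X i)"
  shows "(\<Sum>u\<in>(\<Union>i<n. Cons (\<alpha> i) ` X i). \<Sum>v\<in>(\<Union>i<n. Cons (\<alpha> i) ` X i). g (tdist u v))
    = (\<Sum>i<n. \<Sum>j<n. if i = j then \<Sum>p\<in>X i. \<Sum>q\<in>X i. g (tdist p q)
                      else \<Sum>p\<in>X i. \<Sum>q\<in>X j. g (length p + length q + 2))"
proof -
  let ?A = "\<Union>i<n. Cons (\<alpha> i) ` X i"
  have "(\<Sum>u\<in>?A. \<Sum>v\<in>?A. g (tdist u v)) = (\<Sum>i<n. \<Sum>p\<in>X i. \<Sum>j<n. \<Sum>q\<in>X j. g (tdist (\<alpha> i # p) (\<alpha> j # q)))"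
    by (simp add: sum_UN_image_Cons[OF inj fin])
  also have "\<dots> = (\<Sum>i<n. \<Sum>j<n. \<Sum>p\<in>X i. \<Sum>q\<in>X j. g (tdist (\<alpha> i # p) (\<alpha> j # q)))"
    by (rule sum.cong[OF refl], rule sum.swap)
  also have "\<dots> = (\<Sum>i<n. \<Sum>j<n. if i = j then \<Sum>p\<in>X i. \<Sum>q\<in>X i. g (tdist p q)
                      else \<Sum>p\<in>X i. \<Sum>q\<in>X j. g (length p + length q + 2))"
  proof (intro sum.cong refl)
    fix i j assume "i \<in> {..<n}" "j \<in> {..<n}"
    then have "\<alpha> i = \<alpha> j \<longleftrightarrow> i = j" using inj unfolding inj_on_def by blast
    then show "(\<Sum>p\<in>X i. \<Sum>q\<in>X j. g (tdist (\<alpha> i # p) (\<alpha> j # q))) =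
      (if i = j then \<Sum>p\<in>X i. \<Sum>q\<in>X i. g (tdist p q) else \<Sum>p\<in>X i. \<Sum>q\<in>X j. g (length p + length q + 2))"
      by (simp add: tdist_Cons_Cons)
  qed
  finally show ?thesis .
qed

lemma sum_depth_pairs_eq_if_dist_depth_equiv:
  fixes g :: "nat \<Rightarrow> nat"
  assumes "dist_depth_equiv X X'" "dist_depth_equiv Y Y'"
  shows "(\<Sum>p\<in>X. \<Sum>q\<in>Y. g (length p + length q + 2)) = (\<Sum>p\<in>X'. \<Sum>q\<in>Y'. g (length p + length q + 2))"
proof -
  have "(\<Sum>p\<in>X. \<Sum>q\<in>Y. g (length p + length q + 2)) = (\<Sum>p\<in>X. \<Sum>q\<in>Y'. g (length p + length q + 2))"
    by (intro sum.cong refl dist_depth_equivD(4)[OF assms(2)])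
  also have "\<dots> = (\<Sum>p\<in>X'. \<Sum>q\<in>Y'. g (length p + length q + 2))"
    by (rule dist_depth_equivD(4)[OF assms(1), of "\<lambda>a. \<Sum>q\<in>Y'. g (a + length q + 2)"])
  finally show ?thesis .
qed

lemma dist_depth_equiv_UN_image_Cons:
  fixes n :: nat
  assumes inj_\<alpha>: "inj_on \<alpha> {..<n}" and inj_\<beta>: "inj_on \<beta> {..<n}"
    and equiv: "\<forall>i<n. dist_depth_equiv (X i) (Y i)"
  shows "dist_depth_equiv (\<Union>i<n. Cons (\<alpha> i) ` X i) (\<Union>i<n. Cons (\<beta> i) ` Y i)"
proof -
  have fin_X: "\<forall>i<n. finite (X i)" and fin_Y: "\<forall>i<n. finite (Y i)"
    using equiv dist_depth_equivD by blast+
  have "(\<Sum>u\<in>(\<Union>i<n. Cons (\<alpha> i) ` X i). g (length u)) = (\<Sum>u\<in>(\<Union>i<n. Cons (\<beta> i) ` Y i). g (length u))"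
    for g :: "nat \<Rightarrow> nat"
  proof -
    have "(\<Sum>u\<in>(\<Union>i<n. Cons (\<alpha> i) ` X i). g (length u)) = (\<Sum>i<n. \<Sum>p\<in>X i. g (Suc (length p)))"
      by (simp add: sum_UN_image_Cons[OF inj_\<alpha> fin_X])
    also have "\<dots> = (\<Sum>i<n. \<Sum>p\<in>Y i. g (Suc (length p)))"
    proof (rule sum.cong[OF refl])
      fix i assume "i \<in> {..<n}"
      then show "(\<Sum>p\<in>X i. g (Suc (length p))) = (\<Sum>p\<in>Y i. g (Suc (length p)))"
        using equiv dist_depth_equivD(4)[of "X i" "Y i" "\<lambda>a. g (Suc a)"] by simp
    qed
    also have "\<dots> = (\<Sum>u\<in>(\<Union>i<n. Cons (\<beta> i) ` Y i). g (length u))"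
      by (simp add: sum_UN_image_Cons[OF inj_\<beta> fin_Y])
    finally show ?thesis .
  qed
  moreover have "(\<Sum>u\<in>(\<Union>i<n. Cons (\<alpha> i) ` X i). \<Sum>v\<in>(\<Union>i<n. Cons (\<alpha> i) ` X i). g (tdist u v))
     = (\<Sum>u\<in>(\<Union>i<n. Cons (\<beta> i) ` Y i). \<Sum>v\<in>(\<Union>i<n. Cons (\<beta> i) ` Y i). g (tdist u v))"
    for g :: "nat \<Rightarrow> nat"
    unfolding sum_tdist_UN_image_Cons[OF inj_\<alpha> fin_X] sum_tdist_UN_image_Cons[OF inj_\<beta> fin_Y]
    using equiv dist_depth_equivD(3) sum_depth_pairs_eq_if_dist_depth_equiv
    by (intro sum.cong refl) auto
  ultimately show ?thesis
    unfolding dist_depth_equiv_def using fin_X fin_Y by auto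
qed

definition equiv_pair_in :: "rtree \<Rightarrow> nat list set \<Rightarrow> nat list set \<Rightarrow> bool" where
  "equiv_pair_in t A B \<longleftrightarrow> A \<subseteq> verts t \<and> B \<subseteq> verts t \<and> A \<inter> B = {} \<and> dist_depth_equiv A B"

lemma equiv_pair_in_UN_image_Cons:
  fixes m :: nat
  assumes inj_\<alpha>: "inj_on \<alpha> {..<m}" and inj_\<beta>: "inj_on \<beta> {..<m}"
    and children: "\<forall>k<m. \<alpha> k < length ts \<and> \<beta> k < length ts"
    and pairs: "\<forall>k<m. X k \<subseteq> verts (ts ! \<alpha> k) \<and> Y k \<subseteq> verts (ts ! \<beta> k) \<and> dist_depth_equiv (X k) (Y k)"
    and disjoint: "\<forall>k<m. \<forall>k'<m. \<alpha> k = \<beta> k' \<longrightarrow> X k \<inter> Y k' = {}"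
  shows "equiv_pair_in (Nd ts) (\<Union>k<m. Cons (\<alpha> k) ` X k) (\<Union>k<m. Cons (\<beta> k) ` Y k)"
    and "card (\<Union>k<m. Cons (\<alpha> k) ` X k) = (\<Sum>k<m. card (X k))"
proof -
  have "(\<Union>k<m. Cons (\<alpha> k) ` X k) \<subseteq> verts (Nd ts)" "(\<Union>k<m. Cons (\<beta> k) ` Y k) \<subseteq> verts (Nd ts)"
    using children pairs by (fastforce intro: Cons_in_verts_Nd)+
  moreover have "(\<Union>k<m. Cons (\<alpha> k) ` X k) \<inter> (\<Union>k<m. Cons (\<beta> k) ` Y k) = {}"
    using disjoint by auto
  moreover have "dist_depth_equiv (\<Union>k<m. Cons (\<alpha> k) ` X k) (\<Union>k<m. Cons (\<beta> k) ` Y k)"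
    using pairs by (simp add: dist_depth_equiv_UN_image_Cons[OF inj_\<alpha> inj_\<beta>])
  ultimately show "equiv_pair_in (Nd ts) (\<Union>k<m. Cons (\<alpha> k) ` X k) (\<Union>k<m. Cons (\<beta> k) ` Y k)"
    unfolding equiv_pair_in_def by blast
  show "card (\<Union>k<m. Cons (\<alpha> k) ` X k) = (\<Sum>k<m. card (X k))"
    using pairs dist_depth_equivD(1) by (intro card_UN_image_Cons[OF inj_\<alpha>]) blast
qed

definition path_prefixes :: "nat list \<Rightarrow> nat \<Rightarrow> nat list set" where
  "path_prefixes w h = (\<lambda>a. take a w) ` {..<h}"

lemma sum_path_prefixes:
  assumes "h \<le> Suc (length w)"
  shows "(\<Sum>u\<in>path_prefixes w h. \<phi> u) = (\<Sum>a<h. \<phi> (take a w))"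
proof -
  have "inj_on (\<lambda>a. take a w) {..<h}"
  proof (rule inj_onI)
    fix a b assume "a \<in> {..<h}" "b \<in> {..<h}" "take a w = take b w"
    then have "length (take a w) = length (take b w)" by simp
    with \<open>a \<in> {..<h}\<close> \<open>b \<in> {..<h}\<close> assms show "a = b" by simp
  qed
  then show ?thesis unfolding path_prefixes_def by (simp add: sum.reindex)
qed

lemma card_path_prefixes: "h \<le> Suc (length w) \<Longrightarrow> card (path_prefixes w h) = h"
  using sum_path_prefixes[of h w "\<lambda>_. 1::nat"] by simp

lemma path_prefixes_subset_verts: "is_pos t w \<Longrightarrow> path_prefixes w h \<subseteq> verts t"
  unfolding path_prefixes_def verts_def by (auto intro: is_pos_take)

text \<open>Both sets are isometric to a path on \<open>h\<close> vertices starting at depth 0.\<close>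

lemma dist_depth_equiv_path_prefixes:
  assumes "h \<le> Suc (length w)" "h \<le> Suc (length w')"
  shows "dist_depth_equiv (path_prefixes w h) (path_prefixes w' h)"
proof -
  have dist: "(\<Sum>u\<in>path_prefixes w h. \<Sum>v\<in>path_prefixes w h. g (tdist u v))
      = (\<Sum>a<h. \<Sum>b<h. g (if a \<le> b then b - a else a - b))"
    if "h \<le> Suc (length w)" for w and g :: "nat \<Rightarrow> nat"
    using that by (simp add: sum_path_prefixes tdist_take_take)
  have depth: "(\<Sum>u\<in>path_prefixes w h. g (length u)) = (\<Sum>a<h. g a)"
    if "h \<le> Suc (length w)" for w and g :: "nat \<Rightarrow> nat"
    using that by (simp add: sum_path_prefixes min_absorb1)
  show ?thesis
    unfolding dist_depth_equiv_def using dist depth assms by (simp add: path_prefixes_def)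
qed

lemma rev_sort_permutation:
  fixes xs :: "'a::linorder list"
  obtains \<sigma> where "\<sigma> permutes {..<length xs}" "\<And>j. j < length xs \<Longrightarrow> rev (sort xs) ! j = xs ! \<sigma> j"
proof -
  have "mset xs = mset (rev (sort xs))" by simp
  then obtain \<sigma> where "\<sigma> permutes {..<length xs}" "permute_list \<sigma> xs = rev (sort xs)"
    by (metis mset_eq_permutation)
  with that show ?thesis by (metis permute_list_nth)
qed

lemma sorted_children_heights:
  obtains \<sigma> where "\<sigma> permutes {..<length ts}"
    "\<And>j. j < length ts \<Longrightarrow> rev (sort (map height ts)) ! j = height (ts ! \<sigma> j)"
proof -
  obtain \<sigma> where \<sigma>: "\<sigma> permutes {..<length ts}"
    and nth: "\<And>j. j < length ts \<Longrightarrow> rev (sort (map height ts)) ! j = map height ts ! \<sigma> j"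
    using rev_sort_permutation[of "map height ts"] by auto
  have "j < length ts \<Longrightarrow> \<sigma> j < length ts" for j
    using permutes_in_image[OF \<sigma>] by simp
  with \<sigma> nth that show ?thesis by simp
qed

lemma rev_sort_nth_antimono:
  fixes xs :: "'a::linorder list"
  assumes "j \<le> j'" "j' < length xs"
  shows "rev (sort xs) ! j' \<le> rev (sort xs) ! j"
proof -
  have "sort xs ! (length xs - Suc j') \<le> sort xs ! (length xs - Suc j)"
    by (rule sorted_nth_mono) (use assms in auto)
  then show ?thesis using assms by (simp add: rev_nth)
qed

lemma sum_padded_heights:
  "(\<Sum>i<length (padded_heights ts) div 2. padded_heights ts ! (2 * i + 1))
     = (\<Sum>k<length ts div 2. rev (sort (map height ts)) ! (2 * k + 1))"
proof (cases "even (length ts)")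
  case True
  then show ?thesis by (simp add: padded_heights_def)
next
  case False
  define hs where "hs = rev (sort (map height ts))"
  have "padded_heights ts = hs @ [0]" "length hs = length ts"
    using False by (simp_all add: padded_heights_def hs_def)
  moreover have "length (hs @ [0]) div 2 = Suc (length ts div 2)"
    using False \<open>length hs = length ts\<close> by simp
  moreover have "(hs @ [0]) ! (2 * (length ts div 2) + 1) = 0"
    using False \<open>length hs = length ts\<close> by (simp add: nth_append)
  moreover have "(\<Sum>k<length ts div 2. (hs @ [0]) ! (2 * k + 1)) = (\<Sum>k<length ts div 2. hs ! (2 * k + 1))"
  proof (intro sum.cong refl)
    fix k assume "k \<in> {..<length ts div 2}"
    then have "2 * k + 1 < length hs" using \<open>length hs = length ts\<close> by simp
    then show "(hs @ [0]) ! (2 * k + 1) = hs ! (2 * k + 1)" by (simp add: nth_append)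
  qed
  ultimately show ?thesis by (simp add: hs_def)
qed

lemma equiv_pair_in_children:
  assumes IH: "\<forall>t\<in>set ts. \<exists>A B. equiv_pair_in t A B \<and> f t \<le> card A"
  shows "\<exists>A B. equiv_pair_in (Nd ts) A B \<and> sum_list (map f ts) \<le> card A"
proof -
  let ?n = "length ts"
  have "\<forall>i<?n. \<exists>A B. equiv_pair_in (ts ! i) A B \<and> f (ts ! i) \<le> card A"
    using IH by simp
  then obtain X Y where XY: "\<forall>i<?n. equiv_pair_in (ts ! i) (X i) (Y i) \<and> f (ts ! i) \<le> card (X i)"
    by metis
  let ?A = "\<Union>i<?n. Cons (id i) ` X i" and ?B = "\<Union>i<?n. Cons (id i) ` Y i"
  have "\<forall>i<?n. id i < length ts \<and> id i < length ts" by simp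
  moreover have "\<forall>i<?n. X i \<subseteq> verts (ts ! id i) \<and> Y i \<subseteq> verts (ts ! id i) \<and> dist_depth_equiv (X i) (Y i)"
    and "\<forall>i<?n. \<forall>i'<?n. id i = id i' \<longrightarrow> X i \<inter> Y i' = {}"
    using XY by (auto simp: equiv_pair_in_def)
  ultimately have "equiv_pair_in (Nd ts) ?A ?B" and "card ?A = (\<Sum>i<?n. card (X i))"
    by (rule equiv_pair_in_UN_image_Cons[OF inj_on_id inj_on_id])+
  moreover have "sum_list (map f ts) \<le> (\<Sum>i<?n. card (X i))"
    using XY by (auto simp: sum_list_sum_nth atLeast0LessThan intro!: sum_mono)
  ultimately show ?thesis by auto
qed

lemma equiv_pair_in_paired_paths:
  "\<exists>A B. equiv_pair_in (Nd ts) A B \<and>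
     (\<Sum>i<length (padded_heights ts) div 2. padded_heights ts ! (2 * i + 1)) \<le> card A"
proof -
  define hs where "hs = rev (sort (map height ts))"
  define m where "m = length ts div 2"
  obtain \<sigma> where \<sigma>: "\<sigma> permutes {..<length ts}"
    and hs_nth: "\<And>j. j < length ts \<Longrightarrow> hs ! j = height (ts ! \<sigma> j)"
    using sorted_children_heights unfolding hs_def by blast
  have \<sigma>_less: "j < length ts \<Longrightarrow> \<sigma> j < length ts" for j
    using permutes_in_image[OF \<sigma>] by simp
  have \<sigma>_eq: "\<sigma> j = \<sigma> j' \<longleftrightarrow> j = j'" for j j'
    using permutes_inj[OF \<sigma>] by (auto dest: injD)
  obtain w where w: "\<And>t. is_pos t (w t)" "\<And>t. Suc (length (w t)) = height t"
    using longest_root_path by blast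
  define \<alpha> where "\<alpha> k = \<sigma> (2 * k)" for k
  define \<beta> where "\<beta> k = \<sigma> (2 * k + 1)" for k
  define X where "X k = path_prefixes (w (ts ! \<alpha> k)) (hs ! (2 * k + 1))" for k
  define Y where "Y k = path_prefixes (w (ts ! \<beta> k)) (hs ! (2 * k + 1))" for k
  have pair_less: "2 * k + 1 < length ts" if "k < m" for k
    using that unfolding m_def by linarith
  have children: "\<forall>k<m. \<alpha> k < length ts \<and> \<beta> k < length ts"
    using pair_less \<sigma>_less by (simp add: \<alpha>_def \<beta>_def Suc_lessD)
  have heights: "hs ! (2 * k + 1) \<le> Suc (length (w (ts ! \<alpha> k))) \<and> hs ! (2 * k + 1) \<le> Suc (length (w (ts ! \<beta> k)))"
    if "k < m" for k
  proof -
    have "hs ! (2 * k + 1) \<le> hs ! (2 * k)"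
      using rev_sort_nth_antimono[of "2 * k" "2 * k + 1" "map height ts"] pair_less[OF that]
      by (simp add: hs_def)
    then show ?thesis
      using pair_less[OF that] by (simp add: \<alpha>_def \<beta>_def hs_nth w(2))
  qed
  have inj: "inj_on \<alpha> {..<m}" "inj_on \<beta> {..<m}"
    by (auto intro!: inj_onI simp: \<alpha>_def \<beta>_def \<sigma>_eq)
  have pairs: "\<forall>k<m. X k \<subseteq> verts (ts ! \<alpha> k) \<and> Y k \<subseteq> verts (ts ! \<beta> k) \<and> dist_depth_equiv (X k) (Y k)"
    using heights by (simp add: X_def Y_def w(1) path_prefixes_subset_verts dist_depth_equiv_path_prefixes)
  have "\<alpha> k \<noteq> \<beta> k'" for k k'
    unfolding \<alpha>_def \<beta>_def \<sigma>_eq by presburger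
  then have disjoint: "\<forall>k<m. \<forall>k'<m. \<alpha> k = \<beta> k' \<longrightarrow> X k \<inter> Y k' = {}"
    by blast
  note glued = equiv_pair_in_UN_image_Cons[OF inj children pairs disjoint]
  have "(\<Sum>k<m. card (X k)) = (\<Sum>k<m. hs ! (2 * k + 1))"
    using heights by (simp add: X_def card_path_prefixes)
  also have "\<dots> = (\<Sum>i<length (padded_heights ts) div 2. padded_heights ts ! (2 * i + 1))"
    by (simp only: sum_padded_heights m_def hs_def)
  finally show ?thesis using glued by auto
qed

lemma exists_equiv_pair_in_card_ge_f: "\<exists>A B. equiv_pair_in t A B \<and> f t \<le> card A"
proof (induction t)
  case (Nd ts)
  show ?case
  proof (cases "ts = []")
    case True
    then show ?thesis by (auto simp: equiv_pair_in_def dist_depth_equiv_def)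
  next
    case False
    have "\<forall>t\<in>set ts. \<exists>A B. equiv_pair_in t A B \<and> f t \<le> card A"
      using Nd.IH by blast
    then obtain A B where AB: "equiv_pair_in (Nd ts) A B" "sum_list (map f ts) \<le> card A"
      using equiv_pair_in_children by blast
    obtain A' B' where A'B': "equiv_pair_in (Nd ts) A' B'"
      "(\<Sum>i<length (padded_heights ts) div 2. padded_heights ts ! (2 * i + 1)) \<le> card A'"
      using equiv_pair_in_paired_paths by blast
    have "f (Nd ts) \<le> card A \<or> f (Nd ts) \<le> card A'"
      using False AB(2) A'B'(2) by (simp add: max_def)
    with AB(1) A'B'(1) show ?thesis by blast
  qed
qed

theorem lemma1:
  fixes t :: rtree
  shows "\<exists>A B. A \<subseteq> verts t \<and> B \<subseteq> verts t \<and> A \<inter> B = {} \<and> homometric A B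
           \<and> card A = card B \<and> card A \<ge> f t"
proof -
  obtain A B where AB: "equiv_pair_in t A B" "f t \<le> card A"
    using exists_equiv_pair_in_card_ge_f by blast
  then have "dist_depth_equiv A B" "A \<inter> B = {}"
    by (simp_all add: equiv_pair_in_def)
  then have "homometric A B" "card A = card B"
    by (simp_all add: homometric_def profile_eq_if_dist_depth_equiv card_eq_if_dist_depth_equiv)
  with AB show ?thesis
    by (intro exI[of _ A] exI[of _ B]) (simp add: equiv_pair_in_def)
qed

end
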